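(* For every program $\Omega$ with weight constraints, $\Omega$ and its translation $[\Omega]$ (a program with nested expressions) have the same answer sets.
   Context: Programs with nested expressions. A literal is a propositional atom $a$ or its classical negation $\neg a$; a set of literals is consistent if it contains no pair $a,\neg a$. Elementary formulas are literals, $\bot$ and $\top$. Formulas are built from elementary formulas using the unary connective $\mathit{not}$ (negation as failure) and the binary connectives "," (conjunction) and ";" (disjunction). A rule with nested expressions has the form $\mathit{Head}\leftarrow \mathit{Body}$ where $\mathit{Head},\mathit{Body}$ are formulas (a formula $F$ alone stands for $F\leftarrow\top$); a program with nested expressions is a set of such rules. For a consistent set $Z$ of literals: $Z\models l$ iff $l\in Z$ for a literal $l$; $Z\models\top$; $Z\not\models\bot$; $Z\models(F,G)$ iff $Z\models F$ and $Z\models G$; $Z\models(F;G)$ iff $Z\models F$ or $Z\models G$; $Z\models \mathit{not}\,F$ iff $Z\not\models F$. $Z$ satisfies a program if for every rule, $Z\models\mathit{Body}$ implies $Z\models\mathit{Head}$. The reduct $F^Z$: $F^Z=F$ for elementary $F$; $(F,G)^Z=F^Z,G^Z$; $(F;G)^Z=F^Z;G^Z$; $(\mathit{not}\,F)^Z=\bot$ if $Z\models F$ and $\top$ otherwise. $\Pi^Z$ is the set of rules $\mathit{Head}^Z\leftarrow\mathit{Body}^Z$ for the rules of $\Pi$. A consistent set $Z$ is an answer set of a program without $\mathit{not}$ if it is a minimal (under inclusion) consistent set of literals satisfying it; $Z$ is an answer set of an arbitrary program $\Pi$ if $Z$ is an answer set of $\Pi^Z$. Abbreviation: for formulas $F_1,\dots,F_n$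 and a set $X$ of subsets of $\{1,\dots,n\}$, $\langle F_1,\dots,F_n\rangle:X$ denotes the disjunction (;) over all $I\in X$ of the conjunctions (,) of the $F_i$, $i\in I$; the empty conjunction is $\top$ and the empty disjunction is $\bot$. Programs with weight constraints. A rule element is a literal $l$ (positive) or $\mathit{not}\ l$ (negative); $Z\models c$ for a rule element is as for formulas. A weight constraint is $L\le\{c_1=w_1,\dots,c_m=w_m\}\le U$ where $L,U$ are real numbers or $\pm\infty$, $c_1,\dots,c_m$ ($m\ge0$) are rule elements and $w_1,\dots,w_m$ are nonnegative reals; $L\le S$ abbreviates $L\le S\le+\infty$ and $S\le U$ abbreviates $-\infty\le S\le U$. A rule with weight constraints is $C_0\leftarrow C_1,\dots,C_n$ ($n\ge0$) with weight constraints $C_i$; the rule elements of $C_0$ are its head elements. A program with weight constraints is a set of such rules. A literal $c$ is identified with the constraint $1\le\{c=1\}$. A consistent set $Z$ of literals satisfies the weight constraint above if $L\le\sum_{j:Z\models c_j}w_j\le U$, and satisfies a program $\Omega$ if for every rule, whenever $Z$ satisfies $C_1,\dots,C_n$ it satisfies $C_0$. The reduct $(L\le S)^Z$ of $L\le S$ is $L^Z\le S'$ where $S'$ is obtained from $S$ by dropping all pairs $c=w$ with $c$ negative, and $L^Z$ is $L$ minus the sum of the weights $w$ of the pairs $c=w$ in $S$ with $c$ negative and $Z\models c$. The reduct of a rule $L_0\le S_0\le U_0\leftarrow L_1\le S_1\le U_1,\dots,L_n\le S_n\le U_n$ w.r.t. $Z$ is, if $Z\models S_i\le U_i$ for all $1\le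 i\le n$, the set of rules $l\leftarrow (L_1\le S_1)^Z,\dots,(L_n\le S_n)^Z$ for all positive head elements $l$ with $Z\models l$; otherwise it is empty. $\Omega^Z$ is the union of the reducts of the rules of $\Omega$. Such a program (literal heads, bodies of the form $L\le S$ with only positive elements) has a unique minimal set of literals satisfying it, its deductive closure $\mathit{cl}(\Omega^Z)$. A consistent set $Z$ of literals is an answer set of $\Omega$ if $Z\models\Omega$ and $\mathit{cl}(\Omega^Z)=Z$. Translation. For $S=\{c_1=w_1,\dots,c_m=w_m\}$ and real $w$: $[w\le S]=\langle c_1,\dots,c_m\rangle:\{I\subseteq\{1,\dots,m\}: w\le\sum_{i\in I}w_i\}$, $[w<S]=\langle c_1,\dots,c_m\rangle:\{I: w<\sum_{i\in I}w_i\}$, $[S\le U]=\mathit{not}\,[U<S]$, and $[L\le S\le U]=[L\le S],[S\le U]$. For a program $\Omega$ with weight constraints, $[\Omega]$ is obtained by replacing each rule $C_0\leftarrow C_1,\dots,C_n$ with $(l_1;\mathit{not}\,l_1),\dots,(l_p;\mathit{not}\,l_p),[C_0]\leftarrow[C_1],\dots,[C_n]$, where $l_1,\dots,l_p$ are the positive head elements of the rule. *)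

theory Defs
  imports Complex_Main "HOL-Library.Extended_Real"
begin

(* A literal is an atom a or its classical negation \<not>a *)
datatype 'a lit = Pos 'a | Neg 'a

definition consistent :: "'a lit set \<Rightarrow> bool" where
  "consistent Z \<longleftrightarrow> (\<forall>a. \<not> (Pos a \<in> Z \<and> Neg a \<in> Z))"

datatype 'a form =
    FLit "'a lit"
  | FBot
  | FTop
  | FNot "'a form"
  | FConj "'a form" "'a form"
  | FDisj "'a form" "'a form"

fun fsat :: "'a lit set \<Rightarrow> 'a form \<Rightarrow> bool" where
  "fsat Z (FLit l) = (l \<in> Z)"
| "fsat Z FBot = False"
| "fsat Z FTop = True"
| "fsat Z (FNot F) = (\<not> fsat Z F)"
| "fsat Z (FConj F G) = (fsat Z F \<and> fsat Z G)"
| "fsat Z (FDisj F G) = (fsat Z F \<or> fsat Z G)"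

(* a rule Head <- Body is a pair (Head, Body) *)
type_synonym 'a nrule = "'a form \<times> 'a form"
type_synonym 'a nprog = "'a nrule set"

definition nsat :: "'a lit set \<Rightarrow> 'a nprog \<Rightarrow> bool" where
  "nsat Z P \<longleftrightarrow> (\<forall>(H, B) \<in> P. fsat Z B \<longrightarrow> fsat Z H)"

fun freduct :: "'a lit set \<Rightarrow> 'a form \<Rightarrow> 'a form" where
  "freduct Z (FLit l) = FLit l"
| "freduct Z FBot = FBot"
| "freduct Z FTop = FTop"
| "freduct Z (FConj F G) = FConj (freduct Z F) (freduct Z G)"
| "freduct Z (FDisj F G) = FDisj (freduct Z F) (freduct Z G)"
| "freduct Z (FNot F) = (if fsat Z F then FBot else FTop)"

definition nreduct :: "'a nprog \<Rightarrow> 'a lit set \<Rightarrow> 'a nprog" where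
  "nreduct P Z = (\<lambda>(H, B). (freduct Z H, freduct Z B)) ` P"

definition nested_answer_set :: "'a nprog \<Rightarrow> 'a lit set \<Rightarrow> bool" where
  "nested_answer_set P Z \<longleftrightarrow>
     consistent Z \<and> nsat Z (nreduct P Z) \<and>
     (\<forall>Y. Y \<subset> Z \<longrightarrow> consistent Y \<longrightarrow> \<not> nsat Y (nreduct P Z))"

fun conj_list :: "'a form list \<Rightarrow> 'a form" where
  "conj_list [] = FTop"
| "conj_list [F] = F"
| "conj_list (F # Fs) = FConj F (conj_list Fs)"

fun disj_list :: "'a form list \<Rightarrow> 'a form" where
  "disj_list [] = FBot"
| "disj_list [F] = F"
| "disj_list (F # Fs) = FDisj F (disj_list Fs)"

(* <F_1,...,F_n> : X, with X given as a list of index lists (indices 0-based) *)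
definition angle :: "'a form list \<Rightarrow> nat list list \<Rightarrow> 'a form" where
  "angle Fs X = disj_list (map (\<lambda>I. conj_list (map (\<lambda>i. Fs ! i) I)) X)"

(* rule element: literal l (positive) or  not l (negative) *)
datatype 'a elem = PosE "'a lit" | NegE "'a lit"

fun esat :: "'a lit set \<Rightarrow> 'a elem \<Rightarrow> bool" where
  "esat Z (PosE l) = (l \<in> Z)"
| "esat Z (NegE l) = (l \<notin> Z)"

record 'a wc =
  lower :: ereal
  elems :: "('a elem \<times> real) list"
  upper :: ereal

(* a rule C_0 <- C_1, ..., C_n *)
type_synonym 'a wrule = "'a wc \<times> 'a wc list"
type_synonym 'a wprog = "'a wrule set"

definition wc_wf :: "'a wc \<Rightarrow> bool" where
  "wc_wf C \<longleftrightarrow> (\<forall>p \<in> set (elems C). 0 \<le> snd p)"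

definition wprog_wf :: "'a wprog \<Rightarrow> bool" where
  "wprog_wf \<Omega> \<longleftrightarrow> (\<forall>(C0, Cs) \<in> \<Omega>. wc_wf C0 \<and> (\<forall>C \<in> set Cs. wc_wf C))"

definition wsum :: "'a lit set \<Rightarrow> ('a elem \<times> real) list \<Rightarrow> real" where
  "wsum Z S = sum_list (map snd (filter (\<lambda>p. esat Z (fst p)) S))"

definition wcsat :: "'a lit set \<Rightarrow> 'a wc \<Rightarrow> bool" where
  "wcsat Z C \<longleftrightarrow> lower C \<le> ereal (wsum Z (elems C)) \<and> ereal (wsum Z (elems C)) \<le> upper C"

definition wsat :: "'a lit set \<Rightarrow> 'a wprog \<Rightarrow> bool" where
  "wsat Z \<Omega> \<longleftrightarrow> (\<forall>(C0, Cs) \<in> \<Omega>. (\<forall>C \<in> set Cs. wcsat Z C) \<longrightarrow> wcsat Z C0)"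

fun is_pos_elem :: "'a elem \<Rightarrow> bool" where
  "is_pos_elem (PosE l) = True"
| "is_pos_elem (NegE l) = False"

fun elem_lit :: "'a elem \<Rightarrow> 'a lit" where
  "elem_lit (PosE l) = l"
| "elem_lit (NegE l) = l"

(* reduced constraint  L' <= S'  with only positive elements: (L', [(l, w), ...]) *)
type_synonym 'a lc = "ereal \<times> ('a lit \<times> real) list"
(* reduced rule  l <- body *)
type_synonym 'a rrule = "'a lit \<times> 'a lc list"

definition lc_reduct :: "'a lit set \<Rightarrow> 'a wc \<Rightarrow> 'a lc" where
  "lc_reduct Z C =
     (lower C - ereal (sum_list (map snd (filter (\<lambda>p. \<not> is_pos_elem (fst p) \<and> esat Z (fst p)) (elems C)))),
      map (\<lambda>p. (elem_lit (fst p), snd p)) (filter (\<lambda>p. is_pos_elem (fst p)) (elems C)))"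

definition pos_lits :: "'a wc \<Rightarrow> 'a lit list" where
  "pos_lits C = map (\<lambda>p. elem_lit (fst p)) (filter (\<lambda>p. is_pos_elem (fst p)) (elems C))"

definition wreduct :: "'a wprog \<Rightarrow> 'a lit set \<Rightarrow> 'a rrule set" where
  "wreduct \<Omega> Z =
     (\<Union>(C0, Cs) \<in> \<Omega>.
        if (\<forall>C \<in> set Cs. ereal (wsum Z (elems C)) \<le> upper C)
        then {(l, map (lc_reduct Z) Cs) | l. l \<in> set (pos_lits C0) \<and> l \<in> Z}
        else {})"

definition lcsat :: "'a lit set \<Rightarrow> 'a lc \<Rightarrow> bool" where
  "lcsat X c \<longleftrightarrow> fst c \<le> ereal (sum_list (map snd (filter (\<lambda>p. fst p \<in> X) (snd c))))"

definition rsat :: "'a lit set \<Rightarrow> 'a rrule set \<Rightarrow> bool" where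
  "rsat X R \<longleftrightarrow> (\<forall>(l, cs) \<in> R. (\<forall>c \<in> set cs. lcsat X c) \<longrightarrow> l \<in> X)"

definition cl :: "'a rrule set \<Rightarrow> 'a lit set" where
  "cl R = \<Inter> {X. rsat X R}"

definition weight_answer_set :: "'a wprog \<Rightarrow> 'a lit set \<Rightarrow> bool" where
  "weight_answer_set \<Omega> Z \<longleftrightarrow> consistent Z \<and> wsat Z \<Omega> \<and> cl (wreduct \<Omega> Z) = Z"

definition elem_form :: "'a elem \<Rightarrow> 'a form" where
  "elem_form c = (case c of PosE l \<Rightarrow> FLit l | NegE l \<Rightarrow> FNot (FLit l))"

definition index_subsets :: "nat \<Rightarrow> nat list list" where
  "index_subsets m = subseqs [0..<m]"

definition tr_ge :: "ereal \<Rightarrow> ('a elem \<times> real) list \<Rightarrow> 'a form" where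
  "tr_ge w S = angle (map (elem_form \<circ> fst) S)
      (filter (\<lambda>I. w \<le> ereal (\<Sum>i\<leftarrow>I. snd (S ! i))) (index_subsets (length S)))"

definition tr_gt :: "ereal \<Rightarrow> ('a elem \<times> real) list \<Rightarrow> 'a form" where
  "tr_gt w S = angle (map (elem_form \<circ> fst) S)
      (filter (\<lambda>I. w < ereal (\<Sum>i\<leftarrow>I. snd (S ! i))) (index_subsets (length S)))"

definition tr_wc :: "'a wc \<Rightarrow> 'a form" where
  "tr_wc C = FConj (tr_ge (lower C) (elems C)) (FNot (tr_gt (upper C) (elems C)))"

definition tr_rule :: "'a wrule \<Rightarrow> 'a nrule" where
  "tr_rule r = (case r of (C0, Cs) \<Rightarrow>
     (conj_list (map (\<lambda>l. FDisj (FLit l) (FNot (FLit l))) (pos_lits C0) @ [tr_wc C0]),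
      conj_list (map tr_wc Cs)))"

definition translate :: "'a wprog \<Rightarrow> 'a nprog" where
  "translate \<Omega> = tr_rule ` \<Omega>"

end

theory Submission
  imports Defs
begin

text \<open>Fix a guess \<open>Z\<close>. A candidate \<open>Y\<close> is tested against either reduct in a mixed
  valuation: an element \<open>not l\<close> is decided by \<open>Z\<close>, a positive element \<open>l\<close> by \<open>Y\<close>.
  Since weights are nonnegative, the disjunction \<open>[w \<le> S]\<close> over index sets holds in this
  valuation iff the set of all true elements reaches \<open>w\<close>. Hence \<open>Y\<close> satisfies \<open>[\<Omega>]\<^sup>Z\<close>
  iff for every rule whose body holds (lower bounds in the mixed valuation, upper bounds in \<open>Z\<close>)
  the positive head literals in \<open>Z\<close> lie in \<open>Y\<close> (this is what the conjuncts \<open>l; not l\<close>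
  contribute) and the head constraint holds. \<open>\<Omega>\<^sup>Z\<close> demands only the first part, and for
  \<open>Y \<subseteq> Z\<close> with \<open>Z\<close> a model of \<open>\<Omega>\<close> the second part follows from it. So \<open>Z\<close> is a minimal
  model of \<open>[\<Omega>]\<^sup>Z\<close> exactly when it is the least model \<open>cl (\<Omega>\<^sup>Z)\<close>.\<close>

lemma sum_list_map_filter_eq_sum_indices:
  "sum_list (map f (filter P xs)) = (\<Sum>i | i < length xs \<and> P (xs ! i). f (xs ! i))"
proof -
  have "sum_list (map f (filter P xs)) = (\<Sum>i<length xs. if P (xs ! i) then f (xs ! i) else 0)"
    by (subst sum_list_map_filter') (simp add: sum_list_sum_nth atLeast0LessThan)
  also have "\<dots> = (\<Sum>i | i < length xs \<and> P (xs ! i). f (xs ! i))"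
    by (simp add: sum.If_cases Int_def conj_commute)
  finally show ?thesis .
qed

lemma sum_list_subseqs_upt:
  assumes "I \<in> set (subseqs [0..<m])"
  shows "(\<Sum>i\<leftarrow>I. w i) = sum w (set I)" and "set I \<subseteq> {..<m}"
proof -
  show "(\<Sum>i\<leftarrow>I. w i) = sum w (set I)"
    using subseqs_distinctD[OF assms] by (simp add: sum_list_distinct_conv_sum_set)
  show "set I \<subseteq> {..<m}"
    using assms subseqs_powset[of "[0..<m]"] by (auto simp flip: atLeast0LessThan)
qed

lemma ex_subseqs_upt_threshold_iff:
  fixes w :: "nat \<Rightarrow> real"
  assumes nonneg: "\<And>i. i < m \<Longrightarrow> 0 \<le> w i" and "mono R"
  shows "(\<exists>I\<in>set (subseqs [0..<m]). R (\<Sum>i\<leftarrow>I. w i) \<and> (\<forall>i\<in>set I. P i))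
           \<longleftrightarrow> R (\<Sum>i | i < m \<and> P i. w i)"
    (is "?lhs \<longleftrightarrow> R (sum w ?A)")
proof
  assume ?lhs
  then obtain I where I: "I \<in> set (subseqs [0..<m])" "R (sum w (set I))" "set I \<subseteq> Collect P"
    by (auto simp: sum_list_subseqs_upt(1))
  have "sum w (set I) \<le> sum w ?A"
    using I(3) sum_list_subseqs_upt(2)[OF I(1)] nonneg by (intro sum_mono2) auto
  with I(2) \<open>mono R\<close> show "R (sum w ?A)"
    by (auto dest: monoD)
next
  assume "R (sum w ?A)"
  moreover obtain I where I: "I \<in> set (subseqs [0..<m])" "set I = ?A"
    using subset_subseqs[of ?A "[0..<m]"] by force
  ultimately show ?lhs
    by (intro bexI[OF _ I(1)]) (auto simp: sum_list_subseqs_upt(1)[OF I(1)] I(2))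
qed

lemma sum_list_map_filter_mono:
  fixes f :: "'a \<Rightarrow> 'b::ordered_comm_monoid_add"
  assumes "\<forall>x\<in>set xs. P x \<longrightarrow> Q x" and "\<forall>x\<in>set xs. 0 \<le> f x"
  shows "sum_list (map f (filter P xs)) \<le> sum_list (map f (filter Q xs))"
  using assms by (induction xs) (auto intro: add_mono add_increasing)

lemma fsat_conj_list: "fsat Y (conj_list Fs) \<longleftrightarrow> (\<forall>F\<in>set Fs. fsat Y F)"
  by (induction Fs rule: conj_list.induct) auto

lemma fsat_disj_list: "fsat Y (disj_list Fs) \<longleftrightarrow> (\<exists>F\<in>set Fs. fsat Y F)"
  by (induction Fs rule: disj_list.induct) auto

lemma freduct_conj_list: "freduct Z (conj_list Fs) = conj_list (map (freduct Z) Fs)"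
  by (induction Fs rule: conj_list.induct) auto

lemma freduct_disj_list: "freduct Z (disj_list Fs) = disj_list (map (freduct Z) Fs)"
  by (induction Fs rule: disj_list.induct) auto

lemma fsat_freduct_self: "fsat Z (freduct Z F) \<longleftrightarrow> fsat Z F"
  by (induction F) auto

lemma fsat_freduct_angle:
  "fsat Y (freduct Z (angle Fs X)) \<longleftrightarrow> (\<exists>I\<in>set X. \<forall>i\<in>set I. fsat Y (freduct Z (Fs ! i)))"
  by (simp add: angle_def freduct_disj_list freduct_conj_list fsat_disj_list fsat_conj_list)

fun esat_reduct :: "'a lit set \<Rightarrow> 'a lit set \<Rightarrow> 'a elem \<Rightarrow> bool" where
  "esat_reduct Y Z (PosE l) = (l \<in> Y)"
| "esat_reduct Y Z (NegE l) = (l \<notin> Z)"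

definition wsum_reduct :: "'a lit set \<Rightarrow> 'a lit set \<Rightarrow> ('a elem \<times> real) list \<Rightarrow> real" where
  "wsum_reduct Y Z S = sum_list (map snd (filter (\<lambda>p. esat_reduct Y Z (fst p)) S))"

definition wcsat_reduct :: "'a lit set \<Rightarrow> 'a lit set \<Rightarrow> 'a wc \<Rightarrow> bool" where
  "wcsat_reduct Y Z C \<longleftrightarrow>
     lower C \<le> ereal (wsum_reduct Y Z (elems C)) \<and> ereal (wsum Z (elems C)) \<le> upper C"

lemma esat_reduct_self: "esat_reduct Z Z c = esat Z c"
  by (cases c) auto

lemma wsum_reduct_self: "wsum_reduct Z Z S = wsum Z S"
  by (simp add: wsum_reduct_def wsum_def esat_reduct_self)

lemma wcsat_reduct_self: "wcsat_reduct Z Z C \<longleftrightarrow> wcsat Z C"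
  by (simp add: wcsat_reduct_def wcsat_def wsum_reduct_self)

lemma wsum_reduct_mono:
  assumes "Y \<subseteq> Y'" and "\<forall>p\<in>set S. 0 \<le> snd p"
  shows "wsum_reduct Y Z S \<le> wsum_reduct Y' Z S"
proof -
  have "esat_reduct Y Z c \<longrightarrow> esat_reduct Y' Z c" for c
    using assms(1) by (cases c) auto
  then show ?thesis
    unfolding wsum_reduct_def using assms(2) by (intro sum_list_map_filter_mono) auto
qed

lemma wsum_reduct_eq_wsum:
  assumes "\<forall>l. PosE l \<in> fst ` set S \<longrightarrow> (l \<in> Y \<longleftrightarrow> l \<in> Z)"
  shows "wsum_reduct Y Z S = wsum Z S"
proof -
  have "esat_reduct Y Z c = esat Z c" if "c \<in> fst ` set S" for c
    using assms that by (cases c) auto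
  then show ?thesis
    unfolding wsum_reduct_def wsum_def by (metis (mono_tags, lifting) filter_cong image_eqI)
qed

lemma fsat_freduct_elem_form: "fsat Y (freduct Z (elem_form c)) \<longleftrightarrow> esat_reduct Y Z c"
  by (cases c) (auto simp: elem_form_def)

lemma fsat_freduct_threshold:
  assumes nonneg: "\<forall>p\<in>set S. 0 \<le> snd p" and "mono R"
  shows "fsat Y (freduct Z (angle (map (elem_form \<circ> fst) S)
            (filter (\<lambda>I. R (\<Sum>i\<leftarrow>I. snd (S ! i))) (index_subsets (length S)))))
         \<longleftrightarrow> R (wsum_reduct Y Z S)"
proof -
  have "fsat Y (freduct Z (angle (map (elem_form \<circ> fst) S)
            (filter (\<lambda>I. R (\<Sum>i\<leftarrow>I. snd (S ! i))) (index_subsets (length S)))))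
     \<longleftrightarrow> (\<exists>I\<in>set (subseqs [0..<length S]).
            R (\<Sum>i\<leftarrow>I. snd (S ! i)) \<and> (\<forall>i\<in>set I. esat_reduct Y Z (fst (S ! i))))"
    using sum_list_subseqs_upt(2)
    by (fastforce simp: fsat_freduct_angle index_subsets_def fsat_freduct_elem_form)
  also have "\<dots> \<longleftrightarrow> R (wsum_reduct Y Z S)"
    unfolding wsum_reduct_def sum_list_map_filter_eq_sum_indices
    using nonneg \<open>mono R\<close> by (intro ex_subseqs_upt_threshold_iff) auto
  finally show ?thesis .
qed

lemma fsat_freduct_tr_ge:
  assumes "\<forall>p\<in>set S. 0 \<le> snd p"
  shows "fsat Y (freduct Z (tr_ge w S)) \<longleftrightarrow> w \<le> ereal (wsum_reduct Y Z S)"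
  unfolding tr_ge_def
  by (rule fsat_freduct_threshold[OF assms]) (auto simp: mono_def le_bool_def intro: order_trans)

lemma fsat_freduct_tr_gt:
  assumes "\<forall>p\<in>set S. 0 \<le> snd p"
  shows "fsat Y (freduct Z (tr_gt w S)) \<longleftrightarrow> w < ereal (wsum_reduct Y Z S)"
  unfolding tr_gt_def
  by (rule fsat_freduct_threshold[OF assms]) (auto simp: mono_def le_bool_def intro: less_le_trans)

lemma fsat_freduct_tr_wc:
  assumes "wc_wf C"
  shows "fsat Y (freduct Z (tr_wc C)) \<longleftrightarrow> wcsat_reduct Y Z C"
proof -
  have nonneg: "\<forall>p\<in>set (elems C). 0 \<le> snd p"
    using assms by (simp add: wc_wf_def)
  have "fsat Z (tr_gt (upper C) (elems C)) \<longleftrightarrow> upper C < ereal (wsum Z (elems C))"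
    using fsat_freduct_tr_gt[OF nonneg, of Z Z] by (simp add: fsat_freduct_self wsum_reduct_self)
  then show ?thesis
    by (auto simp: tr_wc_def wcsat_reduct_def fsat_freduct_tr_ge[OF nonneg] not_less)
qed

lemma lcsat_lc_reduct: "lcsat Y (lc_reduct Z C) \<longleftrightarrow> lower C \<le> ereal (wsum_reduct Y Z (elems C))"
proof -
  have pos_neg_split: "sum_list (map snd (filter (\<lambda>p. fst p \<in> Y)
          (map (\<lambda>p. (elem_lit (fst p), snd p)) (filter (\<lambda>p. is_pos_elem (fst p)) S))))
        + sum_list (map snd (filter (\<lambda>p. \<not> is_pos_elem (fst p) \<and> esat Z (fst p)) S))
        = wsum_reduct Y Z S" for S
    unfolding wsum_reduct_def
  proof (induction S)
    case (Cons p S)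
    then show ?case by (cases p, cases "fst p") auto
  qed simp
  have minus_le: "L - ereal r \<le> ereal s \<longleftrightarrow> L \<le> ereal (s + r)" for L r s
    by (cases L) auto
  show ?thesis
    unfolding lcsat_def lc_reduct_def fst_conv snd_conv minus_le pos_neg_split ..
qed

lemma set_pos_lits: "set (pos_lits C) = {l. PosE l \<in> fst ` set (elems C)}"
  by (force simp: pos_lits_def elim: is_pos_elem.elims)

lemma wprog_wf_body: "wprog_wf \<Omega> \<Longrightarrow> (C0, Cs) \<in> \<Omega> \<Longrightarrow> C \<in> set Cs \<Longrightarrow> wc_wf C"
  unfolding wprog_wf_def by fast

lemma nsat_nreduct_translate_iff:
  assumes "wprog_wf \<Omega>"
  shows "nsat Y (nreduct (translate \<Omega>) Z) \<longleftrightarrow>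
    (\<forall>(C0, Cs)\<in>\<Omega>. (\<forall>C\<in>set Cs. wcsat_reduct Y Z C) \<longrightarrow>
       (\<forall>l\<in>set (pos_lits C0). l \<in> Z \<longrightarrow> l \<in> Y) \<and> wcsat_reduct Y Z C0)"
    (is "_ \<longleftrightarrow> ?rhs")
proof -
  have "fsat Y (freduct Z (fst (tr_rule (C0, Cs))))
          \<longleftrightarrow> (\<forall>l\<in>set (pos_lits C0). l \<in> Z \<longrightarrow> l \<in> Y) \<and> wcsat_reduct Y Z C0"
       "fsat Y (freduct Z (snd (tr_rule (C0, Cs)))) \<longleftrightarrow> (\<forall>C\<in>set Cs. wcsat_reduct Y Z C)"
    if "(C0, Cs) \<in> \<Omega>" for C0 Cs
    using that assms
    by (auto simp: wprog_wf_def tr_rule_def freduct_conj_list fsat_conj_list fsat_freduct_tr_wc)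
  note tr_rule_sides = this
  have "nsat Y (nreduct (translate \<Omega>) Z) \<longleftrightarrow>
      (\<forall>r\<in>\<Omega>. fsat Y (freduct Z (snd (tr_rule r))) \<longrightarrow> fsat Y (freduct Z (fst (tr_rule r))))"
    unfolding nsat_def nreduct_def translate_def by (auto simp: case_prod_beta)
  also have "\<dots> \<longleftrightarrow> ?rhs"
    by (intro ball_cong refl) (auto simp: tr_rule_sides)
  finally show ?thesis .
qed

lemma rsat_wreduct_iff:
  "rsat Y (wreduct \<Omega> Z) \<longleftrightarrow>
    (\<forall>(C0, Cs)\<in>\<Omega>. (\<forall>C\<in>set Cs. wcsat_reduct Y Z C) \<longrightarrow>
       (\<forall>l\<in>set (pos_lits C0). l \<in> Z \<longrightarrow> l \<in> Y))"
  by (auto simp: rsat_def wreduct_def wcsat_reduct_def lcsat_lc_reduct split: if_splits)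

lemma wsat_iff_nsat_nreduct_translate:
  "wprog_wf \<Omega> \<Longrightarrow> wsat Z \<Omega> \<longleftrightarrow> nsat Z (nreduct (translate \<Omega>) Z)"
  by (simp add: nsat_nreduct_translate_iff wsat_def wcsat_reduct_self)

lemma rsat_wreduct_self: "rsat Z (wreduct \<Omega> Z)"
  by (simp add: rsat_wreduct_iff)

lemma rsat_wreduct_if_nsat_nreduct_translate:
  "wprog_wf \<Omega> \<Longrightarrow> nsat Y (nreduct (translate \<Omega>) Z) \<Longrightarrow> rsat Y (wreduct \<Omega> Z)"
  unfolding nsat_nreduct_translate_iff rsat_wreduct_iff by fast

lemma nsat_nreduct_translate_if_rsat_wreduct:
  assumes wf: "wprog_wf \<Omega>" and "wsat Z \<Omega>" and "rsat Y (wreduct \<Omega> Z)" and "Y \<subseteq> Z"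
  shows "nsat Y (nreduct (translate \<Omega>) Z)"
  unfolding nsat_nreduct_translate_iff[OF wf]
proof clarify
  fix C0 Cs assume r: "(C0, Cs) \<in> \<Omega>" and body: "\<forall>C\<in>set Cs. wcsat_reduct Y Z C"
  have head_pos: "\<forall>l\<in>set (pos_lits C0). l \<in> Z \<longrightarrow> l \<in> Y"
    using assms(3) r body by (auto simp: rsat_wreduct_iff)
  have "wcsat Z C" if "C \<in> set Cs" for C
  proof -
    have "\<forall>p\<in>set (elems C). 0 \<le> snd p"
      using wprog_wf_body[OF wf r that] by (simp add: wc_wf_def)
    then have "wsum_reduct Y Z (elems C) \<le> wsum Z (elems C)"
      using wsum_reduct_mono[OF \<open>Y \<subseteq> Z\<close>] by (metis wsum_reduct_self)
    then show ?thesis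
      using body that by (auto simp: wcsat_reduct_def wcsat_def intro: order_trans)
  qed
  then have "wcsat Z C0"
    using \<open>wsat Z \<Omega>\<close> r by (auto simp: wsat_def)
  moreover have "wsum_reduct Y Z (elems C0) = wsum Z (elems C0)"
    using head_pos \<open>Y \<subseteq> Z\<close> by (intro wsum_reduct_eq_wsum) (auto simp: set_pos_lits)
  ultimately show "(\<forall>l\<in>set (pos_lits C0). l \<in> Z \<longrightarrow> l \<in> Y) \<and> wcsat_reduct Y Z C0"
    using head_pos by (simp add: wcsat_def wcsat_reduct_def)
qed

lemma cl_subset: "rsat X R \<Longrightarrow> cl R \<subseteq> X"
  unfolding cl_def by blast

lemma lcsat_mono:
  assumes "X \<subseteq> X'" and "\<forall>p\<in>set (snd c). 0 \<le> snd p" and "lcsat X c"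
  shows "lcsat X' c"
proof -
  have "sum_list (map snd (filter (\<lambda>p. fst p \<in> X) (snd c)))
          \<le> sum_list (map snd (filter (\<lambda>p. fst p \<in> X') (snd c)))"
    using assms(1,2) by (intro sum_list_map_filter_mono) auto
  then show ?thesis
    using assms(3) unfolding lcsat_def by (auto intro: order_trans)
qed

lemma rsat_cl:
  assumes "\<forall>(l, cs)\<in>R. \<forall>c\<in>set cs. \<forall>p\<in>set (snd c). 0 \<le> snd p"
  shows "rsat (cl R) R"
  unfolding rsat_def
proof clarify
  fix l cs assume r: "(l, cs) \<in> R" and body: "\<forall>c\<in>set cs. lcsat (cl R) c"
  show "l \<in> cl R"
    unfolding cl_def
  proof
    fix X assume "X \<in> {X. rsat X R}"
    then have X: "rsat X R" by simp
    have "\<forall>c\<in>set cs. lcsat X c"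
      using body assms r lcsat_mono[OF cl_subset[OF X]] by fast
    then show "l \<in> X"
      using X r unfolding rsat_def by blast
  qed
qed

lemma wreduct_nonneg:
  "wprog_wf \<Omega> \<Longrightarrow> \<forall>(l, cs)\<in>wreduct \<Omega> Z. \<forall>c\<in>set cs. \<forall>p\<in>set (snd c). 0 \<le> snd p"
  unfolding wreduct_def lc_reduct_def
  by (fastforce dest: wprog_wf_body simp: wc_wf_def split: if_splits)

theorem theorem1:
  fixes \<Omega> :: "'a wprog" and Z :: "'a lit set"
  assumes "wprog_wf \<Omega>"
  shows "weight_answer_set \<Omega> Z \<longleftrightarrow> nested_answer_set (translate \<Omega>) Z"
proof
  assume "weight_answer_set \<Omega> Z"
  then have "consistent Z" "wsat Z \<Omega>" and cl_eq: "cl (wreduct \<Omega> Z) = Z"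
    by (auto simp: weight_answer_set_def)
  moreover have "\<not> nsat Y (nreduct (translate \<Omega>) Z)" if "Y \<subset> Z" for Y
    using that cl_eq cl_subset rsat_wreduct_if_nsat_nreduct_translate[OF assms] by blast
  ultimately show "nested_answer_set (translate \<Omega>) Z"
    by (simp add: nested_answer_set_def wsat_iff_nsat_nreduct_translate[OF assms])
next
  assume "nested_answer_set (translate \<Omega>) Z"
  then have "consistent Z" and "wsat Z \<Omega>"
    and minimal: "\<And>Y. Y \<subset> Z \<Longrightarrow> consistent Y \<Longrightarrow> \<not> nsat Y (nreduct (translate \<Omega>) Z)"
    by (auto simp: nested_answer_set_def wsat_iff_nsat_nreduct_translate[OF assms])
  define Y where "Y = cl (wreduct \<Omega> Z)"
  have "Y \<subseteq> Z"
    unfolding Y_def using rsat_wreduct_self by (rule cl_subset)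
  moreover have "nsat Y (nreduct (translate \<Omega>) Z)"
    using assms \<open>wsat Z \<Omega>\<close> rsat_cl[OF wreduct_nonneg[OF assms]] \<open>Y \<subseteq> Z\<close>
    unfolding Y_def by (rule nsat_nreduct_translate_if_rsat_wreduct)
  ultimately have "Y = Z"
    using minimal[of Y] \<open>consistent Z\<close> unfolding consistent_def by blast
  then show "weight_answer_set \<Omega> Z"
    using \<open>consistent Z\<close> \<open>wsat Z \<Omega>\<close> by (simp add: weight_answer_set_def Y_def)
qed

end
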